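(* Let $k$ be a field of characteristic $0$, let $\Lambda_{\mathbf q}$, $G$, $\chi_{g,l}$, $\mathbb K$, $K_{g,\gamma}$ and $C_g$ be as in the context, and let $g\in G$ and $\gamma\in(\mathbb N\cup\{-1\})^n$ with $\gamma\notin C_g$. Then the complex $K_{g,\gamma}$ is acyclic, i.e. its cohomology vanishes in every degree.
   Context: Fix $n\ge 1$ and scalars $q_{i,j}\in k^*$ ($1\le i,j\le n$) with $q_{j,i}=q_{i,j}^{-1}$ and $q_{i,i}=-1$. Let $\Lambda_{\mathbf q}=k\langle x_1,\dots,x_n\mid x_ix_j=-q_{i,j}x_jx_i,\ x_i^2=0\ (1\le i,j\le n)\rangle$. For $\alpha\in\{0,1\}^n$ write $x^\alpha=x_1^{\alpha_1}\cdots x_n^{\alpha_n}$. Let $G$ be a finite group acting on $\Lambda_{\mathbf q}$ by algebra automorphisms diagonally: ${}^gx_i=\chi_{g,i}x_i$ with $\chi_{g,i}\in k$. The skew group algebra $\Lambda_{\mathbf q}\rtimes G$ is $\Lambda_{\mathbf q}\otimes kG$ with $(\lambda\otimes g)(\mu\otimes h)=\lambda({}^g\mu)\otimes gh$; it is a $\Lambda_{\mathbf q}$-bimodule via $\lambda\mapsto\lambda\otimes1$, and for each $g\in G$, $\Lambda_{\mathbf q}\otimes g$ is a sub-bimodule. For $\beta\in\mathbb N^n$ let $|\beta|=\beta_1+\dots+\beta_n$ and let $[j]\in\mathbb N^n$ be the $j$-th unit vector. Let $\mathbb K$ be the complex of $\Lambda_{\mathbf q}^e$-modules ($\Lambda^e=\Lambda\otimes\Lambda^{op}$)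 with $\mathbb K_m=\bigoplus_{\beta\in\mathbb N^n,|\beta|=m}\Lambda_{\mathbf q}\epsilon_\beta\Lambda_{\mathbf q}$, free on generators $\epsilon_\beta$, with differential $\delta_m(\epsilon_\beta)=\sum_{j=1}^n\big(\prod_{l<j}q_{l,j}^{\beta_l}\,x_j\epsilon_{\beta-[j]}+(-1)^{\sum_{l\le j}\beta_l}\prod_{l>j}(-q_{j,l})^{\beta_l}\,\epsilon_{\beta-[j]}x_j\big)$ (where $\epsilon_{\beta-[j]}:=0$ if $\beta_j=0$), augmented by $\epsilon_0\mapsto 1\in\Lambda_{\mathbf q}$; it is a projective $\Lambda_{\mathbf q}^e$-resolution of $\Lambda_{\mathbf q}$. For $\alpha\in\{0,1\}^n$, $\beta\in\mathbb N^n$, $g\in G$, let $(x^\alpha\otimes g)\epsilon_\beta^*\in\operatorname{Hom}_{\Lambda_{\mathbf q}^e}(\mathbb K_{|\beta|},\Lambda_{\mathbf q}\otimes g)$ be the map sending $\epsilon_\beta\mapsto x^\alpha\otimes g$ and $\epsilon_{\beta'}\mapsto 0$ for $\beta'\ne\beta$. The cochain complex $\operatorname{Hom}_{\Lambda_{\mathbf q}^e}(\mathbb K,\Lambda_{\mathbf q}\otimes g)$ has the differential induced by $\delta$ (precomposition). For $\gamma\in(\mathbb N\cup\{-1\})^n$ let $K^m_{g,\gamma}=\operatorname{span}_k\{(x^\alpha\otimes g)\epsilon_\beta^*\mid \alpha\in\{0,1\}^n,\beta\in\mathbb N^n,|\beta|=m,\beta-\alpha=\gamma\}$; then $K_{g,\gamma}=\bigoplus_m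 K^m_{g,\gamma}$ is a subcomplex of $\operatorname{Hom}_{\Lambda_{\mathbf q}^e}(\mathbb K,\Lambda_{\mathbf q}\otimes g)$. Define $C_g=\{\gamma\in(\mathbb N\cup\{-1\})^n\mid \text{for all } l,\ \gamma_l=-1 \text{ or } (-1)^{\gamma_l}\prod_{k\ne l}(-q_{k,l})^{\gamma_k}=\chi_{g,l}\}$. *)

theory Defs
  imports Main "HOL-Algebra.Group"
begin

text \<open>Indices run over {1..n}. Multi-indices are functions nat => nat
vanishing outside {1..n}. The algebra Lambda_q is modelled by its PBW basis
x^alpha (alpha in {0,1}^n): an element is its coefficient function on alpha.\<close>

definition bitvecs :: "nat \<Rightarrow> (nat \<Rightarrow> nat) set" where
  "bitvecs n = {\<alpha>. (\<forall>i. \<alpha> i \<le> 1) \<and> (\<forall>i. i \<notin> {1..n} \<longrightarrow> \<alpha> i = 0)}"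

definition multideg :: "nat \<Rightarrow> nat \<Rightarrow> (nat \<Rightarrow> nat) set" where
  "multideg n m = {\<beta>. (\<forall>i. i \<notin> {1..n} \<longrightarrow> \<beta> i = 0) \<and> (\<Sum>i\<in>{1..n}. \<beta> i) = m}"

definition unitv :: "nat \<Rightarrow> nat \<Rightarrow> nat" where
  "unitv j = (\<lambda>i. if i = j then 1 else 0)"

text \<open>Structure constant: x^alpha * x^alpha' = mono_mult q n alpha alpha' * x^(alpha+alpha'),
obtained by reordering using x_i x_j = - q_{i,j} x_j x_i and x_i^2 = 0.\<close>
definition mono_mult :: "(nat \<Rightarrow> nat \<Rightarrow> 'k::field) \<Rightarrow> nat \<Rightarrow> (nat \<Rightarrow> nat) \<Rightarrow> (nat \<Rightarrow> nat) \<Rightarrow> 'k" where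
  "mono_mult q n \<alpha> \<alpha>' =
     (if (\<exists>i\<in>{1..n}. \<alpha> i = 1 \<and> \<alpha>' i = 1) then 0
      else (\<Prod>i\<in>{i\<in>{1..n}. \<alpha> i = 1}. \<Prod>j\<in>{j\<in>{1..n}. \<alpha>' j = 1 \<and> j < i}. - q i j))"

definition lam_mult :: "(nat \<Rightarrow> nat \<Rightarrow> 'k::field) \<Rightarrow> nat \<Rightarrow> ((nat \<Rightarrow> nat) \<Rightarrow> 'k) \<Rightarrow> ((nat \<Rightarrow> nat) \<Rightarrow> 'k) \<Rightarrow> ((nat \<Rightarrow> nat) \<Rightarrow> 'k)" where
  "lam_mult q n a b = (\<lambda>\<alpha>''. \<Sum>\<alpha>\<in>bitvecs n. \<Sum>\<alpha>'\<in>bitvecs n.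
      if (\<lambda>i. \<alpha> i + \<alpha>' i) = \<alpha>'' then a \<alpha> * b \<alpha>' * mono_mult q n \<alpha> \<alpha>' else 0)"

definition gen :: "nat \<Rightarrow> ((nat \<Rightarrow> nat) \<Rightarrow> 'k::field)" where
  "gen j = (\<lambda>\<alpha>. if \<alpha> = unitv j then 1 else 0)"

text \<open>Diagonal action of g: x_i maps to chi_i x_i.\<close>
definition gact :: "nat \<Rightarrow> (nat \<Rightarrow> 'k::field) \<Rightarrow> ((nat \<Rightarrow> nat) \<Rightarrow> 'k) \<Rightarrow> ((nat \<Rightarrow> nat) \<Rightarrow> 'k)" where
  "gact n ch a = (\<lambda>\<alpha>. (\<Prod>i\<in>{1..n}. ch i ^ \<alpha> i) * a \<alpha>)"

text \<open>An element of Hom_{Lambda^e}(K_m, Lambda_q \<otimes> g) is determined by the images of the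
free generators eps_beta (|beta| = m); phi beta alpha is the coefficient of x^alpha \<otimes> g
in the image of eps_beta.\<close>
definition HomC :: "nat \<Rightarrow> nat \<Rightarrow> ((nat \<Rightarrow> nat) \<Rightarrow> (nat \<Rightarrow> nat) \<Rightarrow> 'k::field) set" where
  "HomC n m = {\<phi>. \<forall>\<beta> \<alpha>. \<phi> \<beta> \<alpha> \<noteq> 0 \<longrightarrow> \<beta> \<in> multideg n m \<and> \<alpha> \<in> bitvecs n}"

text \<open>Coefficients of the differential delta of K.\<close>
definition coef1 :: "(nat \<Rightarrow> nat \<Rightarrow> 'k::field) \<Rightarrow> nat \<Rightarrow> (nat \<Rightarrow> nat) \<Rightarrow> nat \<Rightarrow> 'k" where
  "coef1 q n \<beta> j = (\<Prod>l\<in>{l\<in>{1..n}. l < j}. q l j ^ \<beta> l)"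

definition coef2 :: "(nat \<Rightarrow> nat \<Rightarrow> 'k::field) \<Rightarrow> nat \<Rightarrow> (nat \<Rightarrow> nat) \<Rightarrow> nat \<Rightarrow> 'k" where
  "coef2 q n \<beta> j = (-1) ^ (\<Sum>l\<in>{l\<in>{1..n}. l \<le> j}. \<beta> l) * (\<Prod>l\<in>{l\<in>{1..n}. j < l}. (- q j l) ^ \<beta> l)"

text \<open>Differential of Hom(K, Lambda_q \<otimes> g) induced by delta (precomposition):
(d phi)(eps_beta) = phi(delta eps_beta), using the bimodule structure
lambda . (mu \<otimes> g) = lambda mu \<otimes> g and (mu \<otimes> g) . lambda = mu (g lambda) \<otimes> g.\<close>
definition hdiff :: "(nat \<Rightarrow> nat \<Rightarrow> 'k::field) \<Rightarrow> nat \<Rightarrow> (nat \<Rightarrow> 'k) \<Rightarrow>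
    ((nat \<Rightarrow> nat) \<Rightarrow> (nat \<Rightarrow> nat) \<Rightarrow> 'k) \<Rightarrow> ((nat \<Rightarrow> nat) \<Rightarrow> (nat \<Rightarrow> nat) \<Rightarrow> 'k)" where
  "hdiff q n ch \<phi> = (\<lambda>\<beta> \<alpha>. \<Sum>j\<in>{1..n}. if \<beta> j = 0 then 0 else
      coef1 q n \<beta> j * lam_mult q n (gen j) (\<phi> (\<beta>(j := \<beta> j - 1))) \<alpha>
    + coef2 q n \<beta> j * lam_mult q n (\<phi> (\<beta>(j := \<beta> j - 1))) (gact n ch (gen j)) \<alpha>)"

definition Kgam :: "nat \<Rightarrow> (nat \<Rightarrow> int) \<Rightarrow> nat \<Rightarrow> ((nat \<Rightarrow> nat) \<Rightarrow> (nat \<Rightarrow> nat) \<Rightarrow> 'k::field) set" where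
  "Kgam n \<gamma> m = {\<phi> \<in> HomC n m. \<forall>\<beta> \<alpha>. \<phi> \<beta> \<alpha> \<noteq> 0 \<longrightarrow>
       (\<forall>l\<in>{1..n}. int (\<beta> l) - int (\<alpha> l) = \<gamma> l)}"

definition in_Cg :: "(nat \<Rightarrow> nat \<Rightarrow> 'k::field) \<Rightarrow> nat \<Rightarrow> (nat \<Rightarrow> 'k) \<Rightarrow> (nat \<Rightarrow> int) \<Rightarrow> bool" where
  "in_Cg q n ch \<gamma> \<longleftrightarrow> (\<forall>l\<in>{1..n}. \<gamma> l = -1 \<or>
      (-1) powi (\<gamma> l) * (\<Prod>k\<in>{1..n} - {l}. (- q k l) powi (\<gamma> k)) = ch l)"

end

theory Submission
  imports Defs
begin

text \<open>A cochain in \<open>K\<^sub>g\<^sub>,\<^sub>\<gamma>\<close> is a family of coefficients \<open>\<phi> \<beta> \<alpha>\<close> with \<open>\<beta> - \<alpha> = \<gamma>\<close>, and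
  evaluating the differential in the monomial basis gives
  \<open>(d\<phi>)(\<beta>, \<alpha>) = \<Sum>\<^sub>j \<plusminus> c\<^sub>j \<phi>(\<beta> - [j], \<alpha> - [j])\<close> with weights \<open>c\<^sub>j\<close> depending only on
  \<open>\<gamma>\<close> and \<open>g\<close>. So \<open>K\<^sub>g\<^sub>,\<^sub>\<gamma>\<close> is, up to signs, the Koszul complex of the exterior algebra on
  \<open>x\<^sub>1, \<dots>, x\<^sub>n\<close> with respect to \<open>\<Sum>\<^sub>j c\<^sub>j x\<^sub>j\<close>. If the defining condition of \<open>C\<^sub>g\<close> fails at
  \<open>l\<close>, then \<open>\<gamma>\<^sub>l \<ge> 0\<close> and \<open>c\<^sub>l \<noteq> 0\<close>, and contraction with the \<open>l\<close>-th dual basis vector,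
  divided by \<open>c\<^sub>l\<close>, is a contracting homotopy: \<open>d h + h d = id\<close>.\<close>

lemma finite_bitvecs: "finite (bitvecs n)"
proof -
  have "bitvecs n \<subseteq> (\<lambda>S i. if i \<in> S then 1 else 0) ` Pow {1..n}"
  proof
    fix a assume a: "a \<in> bitvecs n"
    have "a = (\<lambda>i. if i \<in> {i\<in>{1..n}. a i = 1} then 1 else 0)"
    proof
      fix i
      have "a i \<le> 1" "i \<notin> {1..n} \<Longrightarrow> a i = 0" using a by (auto simp: bitvecs_def)
      then show "a i = (if i \<in> {i\<in>{1..n}. a i = 1} then 1 else 0)" by auto
    qed
    then show "a \<in> (\<lambda>S i. if i \<in> S then 1 else 0) ` Pow {1..n}" by blast
  qed
  then show ?thesis by (rule finite_subset) auto
qed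

lemma unitv_in_bitvecs: "j \<in> {1..n} \<Longrightarrow> unitv j \<in> bitvecs n"
  by (auto simp: bitvecs_def unitv_def)

lemma sum_bitvecs_unitv_shift:
  assumes g: "\<And>\<alpha>'. \<alpha>' \<notin> bitvecs n \<or> \<alpha>' j \<noteq> 0 \<Longrightarrow> g \<alpha>' = 0"
  shows "(\<Sum>\<alpha>'\<in>bitvecs n. if (\<lambda>i. unitv j i + \<alpha>' i) = \<alpha> then g \<alpha>' else 0)
       = (if \<alpha> j = 1 then g (\<alpha>(j := 0)) else 0)"
proof -
  have "(if (\<lambda>i. unitv j i + \<alpha>' i) = \<alpha> then g \<alpha>' else 0)
      = (if \<alpha>' = \<alpha>(j := 0) then (if \<alpha> j = 1 then g \<alpha>' else 0) else 0)" for \<alpha>'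
  proof (cases "\<alpha>' \<in> bitvecs n \<and> \<alpha>' j = 0")
    case True
    then have "((\<lambda>i. unitv j i + \<alpha>' i) = \<alpha>) \<longleftrightarrow> \<alpha>' = \<alpha>(j := 0) \<and> \<alpha> j = 1"
      by (auto simp: unitv_def fun_eq_iff)
    then show ?thesis by auto
  qed (use g in auto)
  then have "(\<Sum>\<alpha>'\<in>bitvecs n. if (\<lambda>i. unitv j i + \<alpha>' i) = \<alpha> then g \<alpha>' else 0)
      = (\<Sum>\<alpha>'\<in>bitvecs n. if \<alpha>' = \<alpha>(j := 0) then (if \<alpha> j = 1 then g \<alpha>' else 0) else 0)"
    by simp
  also have "\<dots> = (if \<alpha> j = 1 then g (\<alpha>(j := 0)) else 0)"
    using finite_bitvecs[of n] g[of "\<alpha>(j := 0)"] by (simp add: sum.delta')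
  finally show ?thesis .
qed

lemma mono_mult_unitv_left:
  assumes "j \<in> {1..n}" and "b j = 0"
  shows "mono_mult q n (unitv j) b = (\<Prod>l\<in>{l\<in>{1..n}. l < j}. if b l = 1 then - q j l else 1)"
proof -
  have unit: "{i\<in>{1..n}. unitv j i = 1} = {j}" using assms(1) by (auto simp: unitv_def)
  have below: "{j'\<in>{1..n}. b j' = 1 \<and> j' < j} = {x\<in>{l\<in>{1..n}. l < j}. b x = 1}" by auto
  have disjoint: "\<not> (\<exists>i\<in>{1..n}. unitv j i = 1 \<and> b i = 1)" using assms(2) by (auto simp: unitv_def)
  have "mono_mult q n (unitv j) b = (\<Prod>j'\<in>{j'\<in>{1..n}. b j' = 1 \<and> j' < j}. - q j j')"
    unfolding mono_mult_def unit if_not_P[OF disjoint] by simp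
  also have "\<dots> = (\<Prod>l\<in>{l\<in>{1..n}. l < j}. if b l = 1 then - q j l else 1)"
    unfolding below by (rule prod.inter_filter) simp
  finally show ?thesis .
qed

lemma mono_mult_unitv_right:
  assumes "j \<in> {1..n}" and "b j = 0"
  shows "mono_mult q n b (unitv j) = (\<Prod>l\<in>{l\<in>{1..n}. j < l}. if b l = 1 then - q l j else 1)"
proof -
  have unit: "{j'\<in>{1..n}. unitv j j' = 1 \<and> j' < i} = (if j < i then {j} else {})" for i
    using assms(1) by (auto simp: unitv_def)
  have disjoint: "\<not> (\<exists>i\<in>{1..n}. b i = 1 \<and> unitv j i = 1)" using assms(2) by (auto simp: unitv_def)
  have "mono_mult q n b (unitv j) = (\<Prod>i\<in>{i\<in>{1..n}. b i = 1}. if j < i then - q i j else 1)"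
    unfolding mono_mult_def if_not_P[OF disjoint] by (rule prod.cong) (simp_all only: unit split: if_split, simp)
  also have "\<dots> = (\<Prod>i\<in>{1..n}. if b i = 1 then (if j < i then - q i j else 1) else 1)"
    by (rule prod.inter_filter) simp
  also have "\<dots> = (\<Prod>i\<in>{1..n}. if j < i then (if b i = 1 then - q i j else 1) else 1)"
    by (rule prod.cong) auto
  also have "\<dots> = (\<Prod>l\<in>{l\<in>{1..n}. j < l}. if b l = 1 then - q l j else 1)"
    by (rule prod.inter_filter[symmetric]) simp
  finally show ?thesis .
qed

lemma mono_mult_unitv_overlap:
  assumes "j \<in> {1..n}" and "b j = 1"
  shows "mono_mult q n (unitv j) b = 0" and "mono_mult q n b (unitv j) = 0"
  using assms by (auto simp: mono_mult_def unitv_def)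

lemma lam_mult_monomial_left:
  assumes j: "j \<in> {1..n}" and supp: "\<And>x. a x \<noteq> 0 \<Longrightarrow> x \<in> bitvecs n"
  shows "lam_mult q n (\<lambda>x. if x = unitv j then d else 0) a \<alpha>
     = (if \<alpha> j = 1 then d * a (\<alpha>(j := 0)) * mono_mult q n (unitv j) (\<alpha>(j := 0)) else 0)"
proof -
  have "lam_mult q n (\<lambda>x. if x = unitv j then d else 0) a \<alpha>
     = (\<Sum>\<alpha>'\<in>bitvecs n. if (\<lambda>i. unitv j i + \<alpha>' i) = \<alpha>
          then d * a \<alpha>' * mono_mult q n (unitv j) \<alpha>' else 0)"
  proof -
    have "lam_mult q n (\<lambda>x. if x = unitv j then d else 0) a \<alpha>
       = (\<Sum>\<alpha>1\<in>bitvecs n. if \<alpha>1 = unitv j then (\<Sum>\<alpha>'\<in>bitvecs n. if (\<lambda>i. unitv j i + \<alpha>' i) = \<alpha>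
            then d * a \<alpha>' * mono_mult q n (unitv j) \<alpha>' else 0) else 0)"
      unfolding lam_mult_def by (rule sum.cong) (auto intro: sum.neutral)
    then show ?thesis using finite_bitvecs[of n] unitv_in_bitvecs[OF j] by (simp add: sum.delta')
  qed
  also have "\<dots> = (if \<alpha> j = 1 then d * a (\<alpha>(j := 0)) * mono_mult q n (unitv j) (\<alpha>(j := 0)) else 0)"
  proof (rule sum_bitvecs_unitv_shift)
    fix \<alpha>' assume "\<alpha>' \<notin> bitvecs n \<or> \<alpha>' j \<noteq> 0"
    moreover have "\<alpha>' j \<le> 1" if "\<alpha>' \<in> bitvecs n" using that by (simp add: bitvecs_def)
    ultimately show "d * a \<alpha>' * mono_mult q n (unitv j) \<alpha>' = 0"
      using supp[of \<alpha>'] mono_mult_unitv_overlap(1)[OF j, of \<alpha>'] by force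
  qed
  finally show ?thesis .
qed

lemma lam_mult_monomial_right:
  assumes j: "j \<in> {1..n}" and supp: "\<And>x. a x \<noteq> 0 \<Longrightarrow> x \<in> bitvecs n"
  shows "lam_mult q n a (\<lambda>x. if x = unitv j then d else 0) \<alpha>
     = (if \<alpha> j = 1 then a (\<alpha>(j := 0)) * d * mono_mult q n (\<alpha>(j := 0)) (unitv j) else 0)"
proof -
  have "lam_mult q n a (\<lambda>x. if x = unitv j then d else 0) \<alpha>
     = (\<Sum>\<alpha>'\<in>bitvecs n. if (\<lambda>i. unitv j i + \<alpha>' i) = \<alpha>
          then a \<alpha>' * d * mono_mult q n \<alpha>' (unitv j) else 0)"
  proof -
    have "lam_mult q n a (\<lambda>x. if x = unitv j then d else 0) \<alpha>
       = (\<Sum>\<alpha>'\<in>bitvecs n. \<Sum>\<alpha>1\<in>bitvecs n. if \<alpha>1 = unitv j then (if (\<lambda>i. \<alpha>' i + unitv j i) = \<alpha>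
            then a \<alpha>' * d * mono_mult q n \<alpha>' (unitv j) else 0) else 0)"
      unfolding lam_mult_def by (intro sum.cong) auto
    then show ?thesis using finite_bitvecs[of n] unitv_in_bitvecs[OF j] by (simp add: sum.delta' add.commute)
  qed
  also have "\<dots> = (if \<alpha> j = 1 then a (\<alpha>(j := 0)) * d * mono_mult q n (\<alpha>(j := 0)) (unitv j) else 0)"
  proof (rule sum_bitvecs_unitv_shift)
    fix \<alpha>' assume "\<alpha>' \<notin> bitvecs n \<or> \<alpha>' j \<noteq> 0"
    moreover have "\<alpha>' j \<le> 1" if "\<alpha>' \<in> bitvecs n" using that by (simp add: bitvecs_def)
    ultimately show "a \<alpha>' * d * mono_mult q n \<alpha>' (unitv j) = 0"
      using supp[of \<alpha>'] mono_mult_unitv_overlap(2)[OF j, of \<alpha>'] by force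
  qed
  finally show ?thesis .
qed

lemma gact_gen:
  assumes "j \<in> {1..n}"
  shows "gact n ch (gen j) = (\<lambda>x. if x = unitv j then ch j else 0)"
proof
  fix x
  have "(\<Prod>i\<in>{1..n}. ch i ^ unitv j i) = (\<Prod>i\<in>{1..n}. if i = j then ch i else 1)"
    by (rule prod.cong) (auto simp: unitv_def)
  also have "\<dots> = ch j" using assms by (simp add: prod.delta')
  finally show "gact n ch (gen j) x = (if x = unitv j then ch j else 0)"
    by (auto simp: gact_def gen_def)
qed

definition sign_before :: "nat \<Rightarrow> (nat \<Rightarrow> nat) \<Rightarrow> nat \<Rightarrow> 'k::field" where
  "sign_before n \<alpha> j = (\<Prod>i\<in>{i\<in>{1..n}. i < j}. (-1) ^ \<alpha> i)"

definition koszul_coeff :: "(nat \<Rightarrow> nat \<Rightarrow> 'k::field) \<Rightarrow> nat \<Rightarrow> (nat \<Rightarrow> 'k) \<Rightarrow> (nat \<Rightarrow> int) \<Rightarrow> nat \<Rightarrow> 'k" where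
  "koszul_coeff q n ch \<gamma> j = (\<Prod>l\<in>{l\<in>{1..n}. l < j}. q l j powi \<gamma> l)
     + ch j * (-1) powi (\<gamma> j + 1) * (\<Prod>l\<in>{l\<in>{1..n}. l < j}. (-1) powi \<gamma> l)
       * (\<Prod>l\<in>{l\<in>{1..n}. j < l}. (- q j l) powi \<gamma> l)"

lemma power_mult_if_inverse:
  fixes x :: "'k::field"
  assumes "x \<noteq> 0" and "y = c * inverse x" and "a \<le> 1"
  shows "x ^ b * (if a = 1 then y else 1) = c ^ a * x powi (int b - int a)"
proof (cases "a = 1")
  case True
  have "x powi (int b - 1) = x ^ b / x" using assms(1) by (simp add: power_int_diff)
  then show ?thesis using True assms(2) by (simp add: divide_inverse)
next
  case False
  then have "a = 0" using assms(3) by simp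
  then show ?thesis by simp
qed

lemma hdiff_term_coeff:
  fixes q :: "nat \<Rightarrow> nat \<Rightarrow> 'k::field"
  assumes j: "j \<in> {1..n}" and \<alpha>j: "\<alpha> j = 1" and \<beta>j: "\<beta> j \<noteq> 0"
    and bits: "\<alpha>(j := 0) \<in> bitvecs n"
    and weight: "\<forall>l\<in>{1..n}. int ((\<beta>(j := \<beta> j - 1)) l) - int ((\<alpha>(j := 0)) l) = \<gamma> l"
    and q_nz: "\<forall>i\<in>{1..n}. \<forall>j\<in>{1..n}. q i j \<noteq> 0"
    and q_inv: "\<forall>i\<in>{1..n}. \<forall>j\<in>{1..n}. q j i = inverse (q i j)"
  shows "coef1 q n \<beta> j * mono_mult q n (unitv j) (\<alpha>(j := 0))
       + coef2 q n \<beta> j * ch j * mono_mult q n (\<alpha>(j := 0)) (unitv j)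
       = sign_before n \<alpha> j * koszul_coeff q n ch \<gamma> j"
proof -
  define below where "below = {l\<in>{1..n}. l < j}"
  define above where "above = {l\<in>{1..n}. j < l}"
  have \<gamma>l: "\<gamma> l = int (\<beta> l) - int (\<alpha> l)" and \<alpha>l: "\<alpha> l \<le> 1" if "l \<in> {1..n}" "l \<noteq> j" for l
  proof -
    have "int ((\<beta>(j := \<beta> j - 1)) l) - int ((\<alpha>(j := 0)) l) = \<gamma> l" using weight that(1) by blast
    then show "\<gamma> l = int (\<beta> l) - int (\<alpha> l)" using that(2) by simp
    have "(\<alpha>(j := 0)) l \<le> 1" using bits unfolding bitvecs_def by blast
    then show "\<alpha> l \<le> 1" using that(2) by simp
  qed
  have \<gamma>j: "\<gamma> j = int (\<beta> j) - 1"
  proof -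
    have "int ((\<beta>(j := \<beta> j - 1)) j) - int ((\<alpha>(j := 0)) j) = \<gamma> j" using weight j by blast
    then show ?thesis using \<beta>j by (simp add: of_nat_diff)
  qed
  have mono_left: "mono_mult q n (unitv j) (\<alpha>(j := 0)) = (\<Prod>l\<in>below. if \<alpha> l = 1 then - q j l else 1)"
    unfolding below_def mono_mult_unitv_left[OF j fun_upd_same] by (rule prod.cong) auto
  have mono_right: "mono_mult q n (\<alpha>(j := 0)) (unitv j) = (\<Prod>l\<in>above. if \<alpha> l = 1 then - q l j else 1)"
    unfolding above_def mono_mult_unitv_right[OF j fun_upd_same] by (rule prod.cong) auto
  have left: "coef1 q n \<beta> j * mono_mult q n (unitv j) (\<alpha>(j := 0))
      = sign_before n \<alpha> j * (\<Prod>l\<in>below. q l j powi \<gamma> l)"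
  proof -
    have "coef1 q n \<beta> j * mono_mult q n (unitv j) (\<alpha>(j := 0))
        = (\<Prod>l\<in>below. q l j ^ \<beta> l * (if \<alpha> l = 1 then - q j l else 1))"
      unfolding mono_left coef1_def below_def[symmetric] prod.distrib ..
    also have "\<dots> = (\<Prod>l\<in>below. (-1) ^ \<alpha> l * q l j powi \<gamma> l)"
    proof (rule prod.cong[OF refl])
      fix l assume "l \<in> below"
      then have l: "l \<in> {1..n}" "l \<noteq> j" by (auto simp: below_def)
      have "q l j \<noteq> 0" using q_nz l(1) j by blast
      moreover have "q j l = inverse (q l j)" using q_inv l(1) j by blast
      then have "- q j l = -1 * inverse (q l j)" by simp
      ultimately show "q l j ^ \<beta> l * (if \<alpha> l = 1 then - q j l else 1) = (-1) ^ \<alpha> l * q l j powi \<gamma> l"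
        unfolding \<gamma>l[OF l] by (rule power_mult_if_inverse[OF _ _ \<alpha>l[OF l]])
    qed
    also have "\<dots> = sign_before n \<alpha> j * (\<Prod>l\<in>below. q l j powi \<gamma> l)"
      by (simp only: prod.distrib sign_before_def below_def)
    finally show ?thesis .
  qed
  have sign: "(-1::'k) ^ (\<Sum>l\<in>{l\<in>{1..n}. l \<le> j}. \<beta> l)
      = (-1) powi (\<gamma> j + 1) * (sign_before n \<alpha> j * (\<Prod>l\<in>below. (-1) powi \<gamma> l))"
  proof -
    have upto_j: "{l\<in>{1..n}. l \<le> j} = insert j below" using j by (auto simp: below_def)
    have "(-1::'k) ^ (\<Sum>l\<in>{l\<in>{1..n}. l \<le> j}. \<beta> l) = (-1) ^ \<beta> j * (\<Prod>l\<in>below. (-1) ^ \<beta> l)"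
      unfolding power_sum upto_j by (simp add: below_def)
    also have "(-1::'k) ^ \<beta> j = (-1) powi (\<gamma> j + 1)" using \<gamma>j by (simp flip: power_int_of_nat)
    also have "(\<Prod>l\<in>below. (-1::'k) ^ \<beta> l) = (\<Prod>l\<in>below. (-1) ^ \<alpha> l * (-1) powi \<gamma> l)"
    proof (rule prod.cong[OF refl])
      fix l assume "l \<in> below"
      then have "\<gamma> l = int (\<beta> l) - int (\<alpha> l)" using \<gamma>l by (auto simp: below_def)
      then show "(-1::'k) ^ \<beta> l = (-1) ^ \<alpha> l * (-1) powi \<gamma> l" by (simp add: power_int_diff)
    qed
    also have "\<dots> = sign_before n \<alpha> j * (\<Prod>l\<in>below. (-1) powi \<gamma> l)"
      unfolding prod.distrib sign_before_def below_def ..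
    finally show ?thesis .
  qed
  have right: "(\<Prod>l\<in>above. (- q j l) ^ \<beta> l) * mono_mult q n (\<alpha>(j := 0)) (unitv j)
      = (\<Prod>l\<in>above. (- q j l) powi \<gamma> l)"
    unfolding mono_right prod.distrib[symmetric]
  proof (rule prod.cong[OF refl])
    fix l assume "l \<in> above"
    then have l: "l \<in> {1..n}" "l \<noteq> j" by (auto simp: above_def)
    have "- q j l \<noteq> 0" using q_nz l(1) j by simp
    moreover have "q l j = inverse (q j l)" using q_inv l(1) j by blast
    then have "- q l j = 1 * inverse (- q j l)" by (simp add: inverse_minus_eq)
    ultimately have "(- q j l) ^ \<beta> l * (if \<alpha> l = 1 then - q l j else 1) = 1 ^ \<alpha> l * (- q j l) powi \<gamma> l"
      unfolding \<gamma>l[OF l] by (rule power_mult_if_inverse[OF _ _ \<alpha>l[OF l]])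
    then show "(- q j l) ^ \<beta> l * (if \<alpha> l = 1 then - q l j else 1) = (- q j l) powi \<gamma> l"
      by (simp only: power_one mult_1)
  qed
  have "coef2 q n \<beta> j = (-1::'k) ^ (\<Sum>l\<in>{l\<in>{1..n}. l \<le> j}. \<beta> l) * (\<Prod>l\<in>above. (- q j l) ^ \<beta> l)"
    unfolding coef2_def above_def ..
  then show ?thesis
    unfolding left sign koszul_coeff_def below_def[symmetric] above_def[symmetric]
    using right by (simp add: algebra_simps)
qed

lemma KgamD:
  assumes "\<phi> \<in> Kgam n \<gamma> m" and "\<phi> \<beta> \<alpha> \<noteq> 0"
  shows "\<beta> \<in> multideg n m" and "\<alpha> \<in> bitvecs n" and "\<forall>l\<in>{1..n}. int (\<beta> l) - int (\<alpha> l) = \<gamma> l"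
  using assms by (auto simp: Kgam_def HomC_def)

lemma hdiff_Kgam:
  fixes q :: "nat \<Rightarrow> nat \<Rightarrow> 'k::field"
  assumes \<phi>: "\<phi> \<in> Kgam n \<gamma> m"
    and q_nz: "\<forall>i\<in>{1..n}. \<forall>j\<in>{1..n}. q i j \<noteq> 0"
    and q_inv: "\<forall>i\<in>{1..n}. \<forall>j\<in>{1..n}. q j i = inverse (q i j)"
  shows "hdiff q n ch \<phi> \<beta> \<alpha> = (\<Sum>j\<in>{1..n}. if \<beta> j = 0 \<or> \<alpha> j \<noteq> 1 then 0
           else sign_before n \<alpha> j * koszul_coeff q n ch \<gamma> j * \<phi> (\<beta>(j := \<beta> j - 1)) (\<alpha>(j := 0)))"
  unfolding hdiff_def
proof (rule sum.cong[OF refl])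
  fix j assume j: "j \<in> {1..n}"
  let ?\<beta> = "\<beta>(j := \<beta> j - 1)" and ?\<alpha> = "\<alpha>(j := 0)"
  have supp: "\<And>x. \<phi> ?\<beta> x \<noteq> 0 \<Longrightarrow> x \<in> bitvecs n" using KgamD(2)[OF \<phi>] by blast
  have left: "lam_mult q n (gen j) (\<phi> ?\<beta>) \<alpha>
      = (if \<alpha> j = 1 then 1 * \<phi> ?\<beta> ?\<alpha> * mono_mult q n (unitv j) ?\<alpha> else 0)"
    unfolding gen_def by (rule lam_mult_monomial_left[OF j supp])
  have right: "lam_mult q n (\<phi> ?\<beta>) (gact n ch (gen j)) \<alpha>
      = (if \<alpha> j = 1 then \<phi> ?\<beta> ?\<alpha> * ch j * mono_mult q n ?\<alpha> (unitv j) else 0)"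
    unfolding gact_gen[OF j] by (rule lam_mult_monomial_right[OF j supp])
  show "(if \<beta> j = 0 then 0 else coef1 q n \<beta> j * lam_mult q n (gen j) (\<phi> ?\<beta>) \<alpha>
          + coef2 q n \<beta> j * lam_mult q n (\<phi> ?\<beta>) (gact n ch (gen j)) \<alpha>)
     = (if \<beta> j = 0 \<or> \<alpha> j \<noteq> 1 then 0 else sign_before n \<alpha> j * koszul_coeff q n ch \<gamma> j * \<phi> ?\<beta> ?\<alpha>)"
  proof (cases "\<beta> j = 0 \<or> \<alpha> j \<noteq> 1 \<or> \<phi> ?\<beta> ?\<alpha> = 0")
    case True
    then show ?thesis unfolding left right by auto
  next
    case False
    then have "\<alpha> j = 1" "\<beta> j \<noteq> 0" "?\<alpha> \<in> bitvecs n"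
      and "\<forall>l\<in>{1..n}. int (?\<beta> l) - int (?\<alpha> l) = \<gamma> l"
      using KgamD(2,3)[OF \<phi>, of ?\<beta> ?\<alpha>] by auto
    note coeff = hdiff_term_coeff[OF j this q_nz q_inv, of ch]
    have "coef1 q n \<beta> j * (1 * \<phi> ?\<beta> ?\<alpha> * mono_mult q n (unitv j) ?\<alpha>)
        + coef2 q n \<beta> j * (\<phi> ?\<beta> ?\<alpha> * ch j * mono_mult q n ?\<alpha> (unitv j))
        = (coef1 q n \<beta> j * mono_mult q n (unitv j) ?\<alpha>
        + coef2 q n \<beta> j * ch j * mono_mult q n ?\<alpha> (unitv j)) * \<phi> ?\<beta> ?\<alpha>"
      by (simp add: algebra_simps)
    then show ?thesis unfolding left right coeff using False by simp
  qed
qed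

lemma hdiff_multideg_0:
  assumes "\<beta> \<in> multideg n 0"
  shows "hdiff q n ch \<phi> \<beta> \<alpha> = 0"
  using assms unfolding hdiff_def multideg_def by (simp add: sum_eq_0_iff)

lemma sign_before_nonzero: "sign_before n \<alpha> j \<noteq> (0::'k::field)"
  unfolding sign_before_def by (simp add: prod_zero_iff)

lemma sign_before_upd:
  "(sign_before n (x(a := v)) l :: 'k::field)
     = sign_before n (x(a := 0)) l * (if a \<in> {1..n} \<and> a < l then (-1) ^ v else 1)"
proof (cases "a \<in> {i\<in>{1..n}. i < l}")
  case True
  have "sign_before n (x(a := w)) l = ((-1::'k) ^ w) * (\<Prod>i\<in>{i\<in>{1..n}. i < l} - {a}. (-1) ^ x i)" for w
  proof -
    have "sign_before n (x(a := w)) l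
        = ((-1::'k) ^ w) * (\<Prod>i\<in>{i\<in>{1..n}. i < l} - {a}. (-1) ^ (x(a := w)) i)"
      unfolding sign_before_def by (subst prod.remove[OF _ True]) simp_all
    also have "(\<Prod>i\<in>{i\<in>{1..n}. i < l} - {a}. (-1::'k) ^ (x(a := w)) i)
        = (\<Prod>i\<in>{i\<in>{1..n}. i < l} - {a}. (-1) ^ x i)"
      by (rule prod.cong) auto
    finally show ?thesis .
  qed
  from this[of v] this[of 0] True show ?thesis by simp
next
  case False
  then have "sign_before n (x(a := v)) l = (sign_before n (x(a := 0)) l :: 'k)"
    unfolding sign_before_def by (intro prod.cong) auto
  moreover have "\<not> (a \<in> {1..n} \<and> a < l)" using False by simp
  ultimately show ?thesis by (simp only: if_False mult_1_right)
qed

text \<open>The sign rule behind the anticommutation of the Koszul differential with the contraction.\<close>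
lemma sign_before_swap:
  assumes j: "j \<in> {1..n}" and l: "l \<in> {1..n}" and "j \<noteq> l" and "\<alpha> j = 1" and "\<alpha> l = 0"
  shows "sign_before n \<alpha> j * sign_before n (\<alpha>(l := 1)) l
       = - (sign_before n (\<alpha>(l := 1)) j * sign_before n (\<alpha>(l := 1, j := 0)) l :: 'k::field)"
proof -
  define z where "z = \<alpha>(j := 0)"
  have z: "z(j := 1) = \<alpha>" "z(j := 0) = z" "z(l := 0) = z" "z(l := 1, j := 1) = \<alpha>(l := 1)"
      "z(l := 1, j := 0) = z(l := 1)" "\<alpha>(l := 1, j := 0) = z(l := 1)"
    using assms by (auto simp: z_def fun_eq_iff)
  have "sign_before n \<alpha> j = (sign_before n z j :: 'k)"
    using sign_before_upd[where 'k='k, of n z j 1 j, unfolded z] by simp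
  moreover have "sign_before n (\<alpha>(l := 1)) l = (sign_before n z l :: 'k) * (if j < l then -1 else 1)"
    using sign_before_upd[where 'k='k, of n z l 1 l, unfolded z] sign_before_upd[where 'k='k, of n "z(l := 1)" j 1 l, unfolded z] j
    by simp
  moreover have "sign_before n (\<alpha>(l := 1)) j = (sign_before n z j :: 'k) * (if l < j then -1 else 1)"
    using sign_before_upd[where 'k='k, of n z l 1 j, unfolded z] sign_before_upd[where 'k='k, of n "z(l := 1)" j 1 j, unfolded z] l
    by simp
  moreover have "sign_before n (\<alpha>(l := 1, j := 0)) l = (sign_before n z l :: 'k)"
    using sign_before_upd[where 'k='k, of n z l 1 l, unfolded z] unfolding z by simp
  ultimately show ?thesis using \<open>j \<noteq> l\<close> by (cases "j < l") auto
qed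

lemma koszul_coeff_nonzero:
  fixes q :: "nat \<Rightarrow> nat \<Rightarrow> 'k::field"
  assumes l: "l \<in> {1..n}"
    and q_nz: "\<forall>i\<in>{1..n}. \<forall>j\<in>{1..n}. q i j \<noteq> 0"
    and q_inv: "\<forall>i\<in>{1..n}. \<forall>j\<in>{1..n}. q j i = inverse (q i j)"
    and ne: "(-1) powi (\<gamma> l) * (\<Prod>k\<in>{1..n} - {l}. (- q k l) powi (\<gamma> k)) \<noteq> ch l"
  shows "koszul_coeff q n ch \<gamma> l \<noteq> 0"
proof
  assume zero: "koszul_coeff q n ch \<gamma> l = 0"
  define below where "below = {k\<in>{1..n}. k < l}"
  define above where "above = {k\<in>{1..n}. l < k}"
  define A where "A = (\<Prod>k\<in>below. q k l powi \<gamma> k)"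
  define B where "B = (\<Prod>k\<in>below. (-1::'k) powi \<gamma> k)"
  define C where "C = (\<Prod>k\<in>above. (- q l k) powi \<gamma> k)"
  define C' where "C' = (\<Prod>k\<in>above. (- q k l) powi \<gamma> k)"
  define s where "s = (-1::'k) powi \<gamma> l"
  have ss: "s * s = 1" unfolding s_def by (simp flip: power_int_mult_distrib)
  have BB: "B * B = 1" unfolding B_def prod.distrib[symmetric]
    by (simp flip: power_int_mult_distrib)
  have CC': "C * C' = 1" unfolding C_def C'_def prod.distrib[symmetric]
  proof (rule prod.neutral, rule ballI)
    fix k assume "k \<in> above"
    then have k: "k \<in> {1..n}" by (simp add: above_def)
    have "q k l = inverse (q l k)" "q l k \<noteq> 0" using q_inv q_nz l k by blast+
    then have "(- q l k) * (- q k l) = 1" by simp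
    then show "(- q l k) powi \<gamma> k * (- q k l) powi \<gamma> k = 1"
      by (simp flip: power_int_mult_distrib)
  qed
  have "A = ch l * s * B * C"
  proof -
    have "(-1::'k) powi (\<gamma> l + 1) = - s" unfolding s_def by (simp add: power_int_add_1)
    then have "A + ch l * (- s) * B * C = 0" using zero unfolding koszul_coeff_def
      by (simp add: A_def B_def C_def below_def above_def)
    then show ?thesis by (simp add: algebra_simps eq_neg_iff_add_eq_0)
  qed
  then have "s * (B * A * C') = ch l * (s * s) * (B * B) * (C * C')" by (simp add: algebra_simps)
  also have "\<dots> = ch l" unfolding ss BB CC' by simp
  also have "s * (B * A * C') = (-1) powi (\<gamma> l) * (\<Prod>k\<in>{1..n} - {l}. (- q k l) powi (\<gamma> k))"
  proof -
    have split: "{1..n} - {l} = below \<union> above" "below \<inter> above = {}" "finite below" "finite above"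
      by (auto simp: below_def above_def)
    have "(\<Prod>k\<in>below. (- q k l) powi \<gamma> k) = B * A"
      unfolding A_def B_def prod.distrib[symmetric]
      by (rule prod.cong[OF refl]) (simp flip: power_int_mult_distrib)
    then show ?thesis
      unfolding split(1) prod.union_disjoint[OF split(3,4,2)] C'_def s_def by simp
  qed
  finally show False using ne by contradiction
qed

lemma sum_fun_upd_Suc:
  fixes \<beta> :: "'a \<Rightarrow> nat"
  assumes "finite A" and "l \<in> A"
  shows "(\<Sum>i\<in>A. (\<beta>(l := Suc (\<beta> l))) i) = Suc (\<Sum>i\<in>A. \<beta> i)"
proof -
  have "(\<Sum>i\<in>A. (\<beta>(l := Suc (\<beta> l))) i) = Suc (\<beta> l) + (\<Sum>i\<in>A - {l}. (\<beta>(l := Suc (\<beta> l))) i)"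
    using assms by (simp add: sum.remove)
  also have "(\<Sum>i\<in>A - {l}. (\<beta>(l := Suc (\<beta> l))) i) = (\<Sum>i\<in>A - {l}. \<beta> i)"
    by (rule sum.cong) auto
  finally show ?thesis using assms by (simp add: sum.remove)
qed

definition koszul_homotopy :: "(nat \<Rightarrow> nat \<Rightarrow> 'k::field) \<Rightarrow> nat \<Rightarrow> (nat \<Rightarrow> 'k) \<Rightarrow> (nat \<Rightarrow> int) \<Rightarrow> nat
    \<Rightarrow> ((nat \<Rightarrow> nat) \<Rightarrow> (nat \<Rightarrow> nat) \<Rightarrow> 'k) \<Rightarrow> ((nat \<Rightarrow> nat) \<Rightarrow> (nat \<Rightarrow> nat) \<Rightarrow> 'k)" where
  "koszul_homotopy q n ch \<gamma> l \<phi> = (\<lambda>\<beta> \<alpha>. if \<alpha> l = 0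
     then \<phi> (\<beta>(l := Suc (\<beta> l))) (\<alpha>(l := 1)) / (sign_before n (\<alpha>(l := 1)) l * koszul_coeff q n ch \<gamma> l)
     else 0)"

text \<open>In degree \<open>0\<close> the truncated \<open>m - 1\<close> is harmless: there the homotopy is zero.\<close>
lemma koszul_homotopy_Kgam:
  assumes \<phi>: "\<phi> \<in> Kgam n \<gamma> m" and l: "l \<in> {1..n}"
  shows "koszul_homotopy q n ch \<gamma> l \<phi> \<in> Kgam n \<gamma> (m - 1)"
  unfolding Kgam_def HomC_def
proof (intro CollectI conjI allI impI)
  fix \<beta> \<alpha> assume nz: "koszul_homotopy q n ch \<gamma> l \<phi> \<beta> \<alpha> \<noteq> 0"
  let ?\<beta> = "\<beta>(l := Suc (\<beta> l))" and ?\<alpha> = "\<alpha>(l := 1)"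
  have \<alpha>l: "\<alpha> l = 0" and "\<phi> ?\<beta> ?\<alpha> \<noteq> 0"
    using nz unfolding koszul_homotopy_def by (auto split: if_splits)
  then have deg: "?\<beta> \<in> multideg n m" and bits: "?\<alpha> \<in> bitvecs n"
    and weight: "\<forall>i\<in>{1..n}. int (?\<beta> i) - int (?\<alpha> i) = \<gamma> i"
    using KgamD[OF \<phi>] by blast+
  have "Suc (\<Sum>i\<in>{1..n}. \<beta> i) = m"
    using deg sum_fun_upd_Suc[OF _ l, of \<beta>] by (simp add: multideg_def)
  moreover have "\<beta> i = 0" if "i \<notin> {1..n}" for i
  proof -
    have "?\<beta> i = 0" using deg that unfolding multideg_def by blast
    with that l show ?thesis by (auto split: if_splits)
  qed
  ultimately show "\<beta> \<in> multideg n (m - 1)" unfolding multideg_def by auto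
  have bit: "?\<alpha> i \<le> 1" and outside: "i \<notin> {1..n} \<Longrightarrow> ?\<alpha> i = 0" for i
    using bits unfolding bitvecs_def by blast+
  have "\<alpha> i \<le> 1" for i using bit[of i] \<alpha>l by (cases "i = l") auto
  moreover have "\<alpha> i = 0" if "i \<notin> {1..n}" for i
    using outside[OF that] that l by (auto split: if_splits)
  ultimately show "\<alpha> \<in> bitvecs n" unfolding bitvecs_def by blast
  show "\<forall>i\<in>{1..n}. int (\<beta> i) - int (\<alpha> i) = \<gamma> i"
  proof
    fix i assume "i \<in> {1..n}"
    then have "int (?\<beta> i) - int (?\<alpha> i) = \<gamma> i" using weight by blast
    with \<alpha>l show "int (\<beta> i) - int (\<alpha> i) = \<gamma> i" by (cases "i = l") simp_all
  qed
qed

context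
  fixes q :: "nat \<Rightarrow> nat \<Rightarrow> 'k::field" and n :: nat and ch :: "nat \<Rightarrow> 'k"
    and \<gamma> :: "nat \<Rightarrow> int" and l :: nat
  assumes l: "l \<in> {1..n}" and \<gamma>l: "\<gamma> l \<ge> 0" and coeff_l: "koszul_coeff q n ch \<gamma> l \<noteq> 0"
    and q_nz: "\<forall>i\<in>{1..n}. \<forall>j\<in>{1..n}. q i j \<noteq> 0"
    and q_inv: "\<forall>i\<in>{1..n}. \<forall>j\<in>{1..n}. q j i = inverse (q i j)"
begin

lemma hdiff_koszul_homotopy_occupied:
  assumes \<phi>: "\<phi> \<in> Kgam n \<gamma> m" and \<alpha>l: "\<alpha> l \<noteq> 0"
  shows "hdiff q n ch (koszul_homotopy q n ch \<gamma> l \<phi>) \<beta> \<alpha> = \<phi> \<beta> \<alpha>"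
proof -
  let ?h = "koszul_homotopy q n ch \<gamma> l \<phi>"
  have "hdiff q n ch ?h \<beta> \<alpha> = (\<Sum>j\<in>{1..n}. if j = l then \<phi> \<beta> \<alpha> else 0)"
    unfolding hdiff_Kgam[OF koszul_homotopy_Kgam[OF \<phi> l] q_nz q_inv]
  proof (rule sum.cong[OF refl])
    fix j assume "j \<in> {1..n}"
    show "(if \<beta> j = 0 \<or> \<alpha> j \<noteq> 1 then 0 else sign_before n \<alpha> j * koszul_coeff q n ch \<gamma> j
            * ?h (\<beta>(j := \<beta> j - 1)) (\<alpha>(j := 0))) = (if j = l then \<phi> \<beta> \<alpha> else 0)"
    proof (cases "j = l")
      case True
      show ?thesis
      proof (cases "\<beta> l = 0 \<or> \<alpha> l \<noteq> 1")
        case vanishing: True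
        have "\<phi> \<beta> \<alpha> = 0"
        proof (rule ccontr)
          assume "\<phi> \<beta> \<alpha> \<noteq> 0"
          then have "\<alpha> l \<le> 1" "int (\<beta> l) - int (\<alpha> l) = \<gamma> l"
            using KgamD[OF \<phi>] l unfolding bitvecs_def by blast+
          with \<alpha>l \<gamma>l vanishing show False by auto
        qed
        with True vanishing show ?thesis by simp
      next
        case False
        then have "(\<beta>(l := \<beta> l - 1))(l := Suc ((\<beta>(l := \<beta> l - 1)) l)) = \<beta>" "(\<alpha>(l := 0))(l := 1) = \<alpha>"
          by (auto simp: fun_eq_iff)
        with True False show ?thesis
          using sign_before_nonzero[where 'k='k, of n \<alpha> l] coeff_l by (simp add: koszul_homotopy_def)
      qed
    qed (use \<alpha>l in \<open>simp add: koszul_homotopy_def\<close>)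
  qed
  also have "\<dots> = \<phi> \<beta> \<alpha>" using l by (simp add: sum.delta)
  finally show ?thesis .
qed

lemma hdiff_koszul_homotopy_vacant:
  assumes \<phi>: "\<phi> \<in> Kgam n \<gamma> m" and \<alpha>l: "\<alpha> l = 0"
  shows "hdiff q n ch (koszul_homotopy q n ch \<gamma> l \<phi>) \<beta> \<alpha>
       + koszul_homotopy q n ch \<gamma> l (hdiff q n ch \<phi>) \<beta> \<alpha> = \<phi> \<beta> \<alpha>"
proof -
  let ?h = "koszul_homotopy q n ch \<gamma> l \<phi>" and ?c = "koszul_coeff q n ch \<gamma>"
  let ?\<beta> = "\<beta>(l := Suc (\<beta> l))" and ?\<alpha> = "\<alpha>(l := 1)"
  define D where "D = sign_before n ?\<alpha> l * ?c l"
  define T where "T j = (if \<beta> j = 0 \<or> \<alpha> j \<noteq> 1 then 0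
      else sign_before n \<alpha> j * ?c j * ?h (\<beta>(j := \<beta> j - 1)) (\<alpha>(j := 0)))" for j
  define T' where "T' j = (if ?\<beta> j = 0 \<or> ?\<alpha> j \<noteq> 1 then 0
      else sign_before n ?\<alpha> j * ?c j * \<phi> (?\<beta>(j := ?\<beta> j - 1)) (?\<alpha>(j := 0)))" for j
  have D: "D \<noteq> 0" using sign_before_nonzero[where 'k='k] coeff_l by (simp add: D_def)
  have "T j + T' j / D = (if j = l then \<phi> \<beta> \<alpha> else 0)" if j: "j \<in> {1..n}" for j
  proof (cases "j = l")
    case True
    have "?\<beta>(l := ?\<beta> l - 1) = \<beta>" "?\<alpha>(l := 0) = \<alpha>" using \<alpha>l by (auto simp: fun_eq_iff)
    with True \<alpha>l D show ?thesis by (simp add: T_def T'_def D_def)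
  next
    case False
    show ?thesis
    proof (cases "\<beta> j \<noteq> 0 \<and> \<alpha> j = 1")
      case True
      define X where "X = \<phi> (?\<beta>(j := ?\<beta> j - 1)) (?\<alpha>(j := 0))"
      have "(\<beta>(j := \<beta> j - 1))(l := Suc ((\<beta>(j := \<beta> j - 1)) l)) = ?\<beta>(j := ?\<beta> j - 1)"
        "(\<alpha>(j := 0))(l := 1) = ?\<alpha>(j := 0)" using \<open>j \<noteq> l\<close> by (auto simp: fun_eq_iff)
      then have "?h (\<beta>(j := \<beta> j - 1)) (\<alpha>(j := 0)) = X / (sign_before n (?\<alpha>(j := 0)) l * ?c l)"
        using \<open>j \<noteq> l\<close> \<alpha>l by (simp add: koszul_homotopy_def X_def)
      then have "T j = sign_before n \<alpha> j * ?c j * (X / (sign_before n (?\<alpha>(j := 0)) l * ?c l))"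
        and "T' j / D = sign_before n ?\<alpha> j * ?c j * X / (sign_before n ?\<alpha> l * ?c l)"
        using True \<open>j \<noteq> l\<close> by (simp_all add: T_def T'_def X_def D_def)
      moreover have "s1 * cj * (x / (s4 * c)) + s3 * cj * x / (s2 * c) = 0"
        if "s1 * s2 = - (s3 * s4)" "s2 \<noteq> 0" "s4 \<noteq> 0" "c \<noteq> 0" for s1 s2 s3 s4 c cj x :: 'k
      proof -
        have "s1 * cj * (x / (s4 * c)) = (s1 * s2) * cj * x / (s2 * s4 * c)"
          using that(2-4) by (simp add: field_simps)
        also have "\<dots> = - (s3 * cj * x / (s2 * c))"
          unfolding that(1) using that(2-4) by (simp add: field_simps)
        finally show ?thesis by simp
      qed
      moreover have "sign_before n \<alpha> j * sign_before n ?\<alpha> l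
          = - (sign_before n ?\<alpha> j * sign_before n (?\<alpha>(j := 0)) l :: 'k)"
        using sign_before_swap[OF j l \<open>j \<noteq> l\<close>] True \<alpha>l by blast
      ultimately show ?thesis
        using False coeff_l sign_before_nonzero[where 'k='k, of n "?\<alpha>(j := 0)" l]
          sign_before_nonzero[where 'k='k, of n ?\<alpha> l]
        by simp
    qed (use False in \<open>simp add: T_def T'_def\<close>)
  qed
  then have "(\<Sum>j\<in>{1..n}. T j) + (\<Sum>j\<in>{1..n}. T' j) / D = \<phi> \<beta> \<alpha>"
    using l by (simp add: sum_divide_distrib flip: sum.distrib)
  moreover have "hdiff q n ch ?h \<beta> \<alpha> = (\<Sum>j\<in>{1..n}. T j)"
    unfolding T_def by (rule hdiff_Kgam[OF koszul_homotopy_Kgam[OF \<phi> l] q_nz q_inv])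
  moreover have "koszul_homotopy q n ch \<gamma> l (hdiff q n ch \<phi>) \<beta> \<alpha> = hdiff q n ch \<phi> ?\<beta> ?\<alpha> / D"
    using \<alpha>l by (simp add: koszul_homotopy_def D_def)
  moreover have "hdiff q n ch \<phi> ?\<beta> ?\<alpha> = (\<Sum>j\<in>{1..n}. T' j)"
    unfolding T'_def by (rule hdiff_Kgam[OF \<phi> q_nz q_inv])
  ultimately show ?thesis by simp
qed

lemma hdiff_koszul_homotopy_cycle:
  assumes \<phi>: "\<phi> \<in> Kgam n \<gamma> m" and cycle: "hdiff q n ch \<phi> = (\<lambda>_ _. 0)"
  shows "hdiff q n ch (koszul_homotopy q n ch \<gamma> l \<phi>) = \<phi>"
proof (intro ext)
  fix \<beta> \<alpha>
  show "hdiff q n ch (koszul_homotopy q n ch \<gamma> l \<phi>) \<beta> \<alpha> = \<phi> \<beta> \<alpha>"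
  proof (cases "\<alpha> l = 0")
    case True
    have "koszul_homotopy q n ch \<gamma> l (hdiff q n ch \<phi>) \<beta> \<alpha> = 0"
      unfolding cycle koszul_homotopy_def by simp
    with hdiff_koszul_homotopy_vacant[OF \<phi>, of \<alpha> \<beta>] True show ?thesis by simp
  qed (rule hdiff_koszul_homotopy_occupied[OF \<phi>])
qed

end

theorem lemma3p1:
  fixes q :: "nat \<Rightarrow> nat \<Rightarrow> 'k::field_char_0"
    and n :: nat
    and G :: "('g, 'b) monoid_scheme"
    and chi :: "'g \<Rightarrow> nat \<Rightarrow> 'k"
    and g :: 'g
    and \<gamma> :: "nat \<Rightarrow> int"
  assumes n: "n \<ge> 1"
    and q_nz: "\<forall>i\<in>{1..n}. \<forall>j\<in>{1..n}. q i j \<noteq> 0"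
    and q_inv: "\<forall>i\<in>{1..n}. \<forall>j\<in>{1..n}. q j i = inverse (q i j)"
    and q_diag: "\<forall>i\<in>{1..n}. q i i = -1"
    and grp: "group G" and fin: "finite (carrier G)"
    and chi_mult: "\<forall>a\<in>carrier G. \<forall>b\<in>carrier G. \<forall>i\<in>{1..n}.
                     chi (a \<otimes>\<^bsub>G\<^esub> b) i = chi a i * chi b i"
    and chi_one: "\<forall>i\<in>{1..n}. chi \<one>\<^bsub>G\<^esub> i = 1"
    and g: "g \<in> carrier G"
    and gam_range: "\<forall>l\<in>{1..n}. \<gamma> l \<ge> -1"
    and gam_supp: "\<forall>l. l \<notin> {1..n} \<longrightarrow> \<gamma> l = 0"
    and notC: "\<not> in_Cg q n (chi g) \<gamma>"
  shows "(\<forall>\<phi>\<in>Kgam n \<gamma> 0. hdiff q n (chi g) \<phi> = (\<lambda>_ _. 0) \<longrightarrow> \<phi> = (\<lambda>_ _. 0))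
       \<and> (\<forall>m. \<forall>\<phi>\<in>Kgam n \<gamma> (Suc m). hdiff q n (chi g) \<phi> = (\<lambda>_ _. 0) \<longrightarrow>
             (\<exists>\<psi>\<in>Kgam n \<gamma> m. hdiff q n (chi g) \<psi> = \<phi>))"
proof -
  obtain l where l: "l \<in> {1..n}" and "\<gamma> l \<noteq> -1"
    and "(-1) powi (\<gamma> l) * (\<Prod>k\<in>{1..n} - {l}. (- q k l) powi (\<gamma> k)) \<noteq> chi g l"
    using notC unfolding in_Cg_def by blast
  then have \<gamma>l: "\<gamma> l \<ge> 0" and coeff_l: "koszul_coeff q n (chi g) \<gamma> l \<noteq> 0"
    using gam_range koszul_coeff_nonzero[OF l q_nz q_inv] by force+
  note boundary = hdiff_koszul_homotopy_cycle[OF l \<gamma>l coeff_l q_nz q_inv]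
  have "\<phi> = (\<lambda>_ _. 0)" if \<phi>: "\<phi> \<in> Kgam n \<gamma> 0" and "hdiff q n (chi g) \<phi> = (\<lambda>_ _. 0)" for \<phi>
  proof (intro ext)
    fix \<beta> \<alpha>
    show "\<phi> \<beta> \<alpha> = 0"
      using boundary[OF that] hdiff_multideg_0 KgamD(1)[OF \<phi>] by metis
  qed
  moreover have "\<exists>\<psi>\<in>Kgam n \<gamma> m. hdiff q n (chi g) \<psi> = \<phi>"
    if \<phi>: "\<phi> \<in> Kgam n \<gamma> (Suc m)" and "hdiff q n (chi g) \<phi> = (\<lambda>_ _. 0)" for m \<phi>
    using koszul_homotopy_Kgam[OF \<phi> l] boundary[OF that] by auto
  ultimately show ?thesis by blast
qed

end
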